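(* Consider a steady travelling-wave solution of the one-dimensional solid-propellant combustion model described in the context, with $c<0$, and assume the solid and gas specific heats are equal, $c_s=c_p$. Then the burnt-gas temperature $T_f:=\lim_{x\to+\infty}T(x)$ satisfies $$T_f=T_0+\frac{Q_g+Q_p}{c_p}.$$
   Context: Travelling-wave frame: solid in $x<0$, gas in $x>0$, interface at $x=0$; $c<0$ is the constant regression velocity, $\rho_s>0$ the solid density, $\dot m:=-\rho_s c>0$. Constants: solid specific heat $c_s>0$ and conductivity $\lambda_s>0$, $D_s:=\lambda_s/(\rho_s c_s)$; gas specific heat $c_p>0$ and conductivity $\lambda_g>0$; common molar mass $M>0$ of the two gas species; stoichiometric coefficient $\nu<0$ of the reactant; molar heat of the gas reaction $Q_{mol}>0$, and $Q_g:=-Q_{mol}/(\nu M)>0$; pyrolysis heat $Q_p\in\mathbb R$ (per unit mass of propellant); initial temperature $T_0>0$. Unknowns: $T:\mathbb R\to(0,\infty)$ continuous, $C^2$ on $(-\infty,0]$ and on $[0,\infty)$ (one-sided derivatives at $0$); on $x>0$: $\rho>0,u$ of class $C^1$, reactant mass fraction $Y$ of class $C^2$, species diffusivity $D_g>0$ continuous, reaction rate $\omega(x)=\omega(T(x),Y(x))\ge0$ continuous. Equations: $-cT'-D_sT''=0$ for $x<0$; for $x>0$: $-c\rho'+(\rho u)'=0$, $\rho(u-c)Y'-(\rho D_gY')'=\nu M\omega$, $\rho(u-c)T'-(\lambda_g T'/c_p)'=\omega Q_{mol}/c_p$. Boundary/interface conditions: $T(x)\to T_0$ and $T'(x)\to0$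 as $x\to-\infty$; $T(0^-)=T(0^+)=T_s$; $\lambda_sT'(0^-)=\dot m Q_p+\lambda_gT'(0^+)$; $\rho(0^+)(u(0^+)-c)=-\rho_s c$; injection mass fraction $Y(0^-)=1$; $\dot m Y(0^-)=\dot m Y(0^+)-\rho(0^+)D_g(0^+)Y'(0^+)$; as $x\to+\infty$: $T(x)\to T_f$ (finite), $T'(x)\to0$, $Y(x)\to0$, $\rho D_gY'(x)\to0$. *)

theory Defs
  imports "HOL-Analysis.Analysis"
begin

end

theory Submission
  imports Defs
begin

text \<open>Each of the three balance laws has a first integral: in the solid
  \<open>-c T - D\<^sub>s T'\<close>, in the gas the mass flux \<open>\<rho> (u - c)\<close> and the combination
  \<open>m c\<^sub>p T - \<lambda>\<^sub>g T' + Q\<^sub>g (m Y - \<rho> D\<^sub>g Y')\<close> of energy and species, in which the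
  reaction terms cancel. Evaluating the solid integral at \<open>-\<infinity>\<close> and at the interface,
  and the gas integral at the interface and at \<open>+\<infinity>\<close>, and matching the two heat fluxes
  through the interface condition, gives
  \<open>m c\<^sub>p T\<^sub>f = m c\<^sub>p T\<^sub>s - m c\<^sub>s (T\<^sub>s - T\<^sub>0) + m Q\<^sub>p + m Q\<^sub>g\<close>;
  the surface temperature drops out exactly when \<open>c\<^sub>s = c\<^sub>p\<close>.\<close>

lemma deriv_zero_imp_constant_on_atLeast:
  fixes f :: "real \<Rightarrow> real"
  assumes "continuous_on {a..} f"
    and "\<And>x. a < x \<Longrightarrow> (f has_real_derivative 0) (at x within {a..})"
    and "a \<le> x"
  shows "f x = f a"
proof -
  have "(f has_derivative (\<lambda>h. 0)) (at y within {a..})" if "y \<in> {a..} - {a}" for y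
    using assms(2)[of y] that by (simp add: has_field_derivative_def lambda_zero)
  then show ?thesis
    using has_derivative_zero_unique_strong_convex[of "{a..}" "{a}" f a "f a" x] assms by auto
qed

lemma deriv_zero_imp_constant_on_atMost:
  fixes f :: "real \<Rightarrow> real"
  assumes "continuous_on {..b} f"
    and "\<And>x. x < b \<Longrightarrow> (f has_real_derivative 0) (at x within {..b})"
    and "x \<le> b"
  shows "f x = f b"
proof -
  have "(f has_derivative (\<lambda>h. 0)) (at y within {..b})" if "y \<in> {..b} - {b}" for y
    using assms(2)[of y] that by (simp add: has_field_derivative_def lambda_zero)
  then show ?thesis
    using has_derivative_zero_unique_strong_convex[of "{..b}" "{b}" f b "f b" x] assms by auto
qed

lemma deriv_zero_imp_eq_limit_at_top:
  fixes f :: "real \<Rightarrow> real"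
  assumes "continuous_on {a..} f"
    and "\<And>x. a < x \<Longrightarrow> (f has_real_derivative 0) (at x within {a..})"
    and "(f \<longlongrightarrow> L) at_top"
  shows "f a = L"
proof -
  have "eventually (\<lambda>x. f x = f a) at_top"
    unfolding eventually_at_top_linorder
    using deriv_zero_imp_constant_on_atLeast[OF assms(1,2)] by blast
  then have "(f \<longlongrightarrow> f a) at_top" by (rule tendsto_eventually)
  then show ?thesis using assms(3) by (rule tendsto_unique[rotated]) simp
qed

lemma deriv_zero_imp_eq_limit_at_bot:
  fixes f :: "real \<Rightarrow> real"
  assumes "continuous_on {..b} f"
    and "\<And>x. x < b \<Longrightarrow> (f has_real_derivative 0) (at x within {..b})"
    and "(f \<longlongrightarrow> L) at_bot"
  shows "f b = L"
proof -
  have "eventually (\<lambda>x. f x = f b) at_bot"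
    unfolding eventually_at_bot_linorder
    using deriv_zero_imp_constant_on_atMost[OF assms(1,2)] by blast
  then have "(f \<longlongrightarrow> f b) at_bot" by (rule tendsto_eventually)
  then show ?thesis using assms(3) by (rule tendsto_unique[rotated]) simp
qed

lemma solid_heat_flux_at_interface:
  fixes T T1 T2 :: "real \<Rightarrow> real"
  assumes T1: "\<forall>x\<le>0. (T has_real_derivative T1 x) (at x within {..0})"
    and T2: "\<forall>x\<le>0. (T1 has_real_derivative T2 x) (at x within {..0})"
    and heat: "\<forall>x<0. - c * T1 x - D * T2 x = 0"
    and T_lim: "(T \<longlongrightarrow> T0) at_bot" and T1_lim: "(T1 \<longlongrightarrow> 0) at_bot"
  shows "D * T1 0 = - c * (T 0 - T0)"
proof -
  let ?F = "\<lambda>x. - c * T x - D * T1 x"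
  have "continuous_on {..0} T" "continuous_on {..0} T1"
    using T1 T2 by (auto intro!: DERIV_continuous_on)
  then have "continuous_on {..0} ?F" by (intro continuous_intros)
  moreover have "(?F has_real_derivative 0) (at x within {..0})" if "x < 0" for x
  proof -
    have "(?F has_real_derivative - c * T1 x - D * T2 x) (at x within {..0})"
      using that by (auto intro!: derivative_eq_intros T1[rule_format] T2[rule_format])
    with heat that show ?thesis by simp
  qed
  moreover have "(?F \<longlongrightarrow> - c * T0 - D * 0) at_bot"
    using T_lim T1_lim by (intro tendsto_intros)
  ultimately have "?F 0 = - c * T0 - D * 0" by (rule deriv_zero_imp_eq_limit_at_bot)
  then show ?thesis by (simp add: algebra_simps)
qed

lemma mass_flux_constant:
  fixes rho rho1 u u1 :: "real \<Rightarrow> real"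
  assumes rho1: "\<forall>x\<ge>0. (rho has_real_derivative rho1 x) (at x within {0..})"
    and u1: "\<forall>x\<ge>0. (u has_real_derivative u1 x) (at x within {0..})"
    and mass: "\<forall>x>0. - c * rho1 x + (rho1 x * u x + rho x * u1 x) = 0"
    and "0 \<le> x"
  shows "rho x * (u x - c) = rho 0 * (u 0 - c)"
proof (rule deriv_zero_imp_constant_on_atLeast[OF _ _ \<open>0 \<le> x\<close>])
  have "continuous_on {0..} rho" "continuous_on {0..} u"
    using rho1 u1 by (auto intro!: DERIV_continuous_on)
  then show "continuous_on {0..} (\<lambda>x. rho x * (u x - c))" by (intro continuous_intros)
  show "((\<lambda>x. rho x * (u x - c)) has_real_derivative 0) (at y within {0..})" if "0 < y" for y
  proof -
    have "((\<lambda>x. rho x * (u x - c)) has_real_derivative rho1 y * (u y - c) + rho y * u1 y)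
        (at y within {0..})"
      using that by (auto intro!: derivative_eq_intros rho1[rule_format] u1[rule_format])
    with mass that show ?thesis by (simp add: algebra_simps)
  qed
qed

lemma gas_energy_species_balance:
  fixes T T1 T2 Y Y1 G G1 w :: "real \<Rightarrow> real"
  assumes T1: "\<forall>x\<ge>0. (T has_real_derivative T1 x) (at x within {0..})"
    and T2: "\<forall>x\<ge>0. (T1 has_real_derivative T2 x) (at x within {0..})"
    and Y1: "\<forall>x\<ge>0. (Y has_real_derivative Y1 x) (at x within {0..})"
    and G_cont: "continuous_on {0..} G"
    and G1: "\<forall>x>0. (G has_real_derivative G1 x) (at x)"
    and energy: "\<forall>x>0. m * T1 x - k * T2 x = a * w x"
    and species: "\<forall>x>0. m * Y1 x - G1 x = b * w x" and "b \<noteq> 0"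
    and T_lim: "(T \<longlongrightarrow> Tf) at_top" and T1_lim: "(T1 \<longlongrightarrow> 0) at_top"
    and Y_lim: "(Y \<longlongrightarrow> 0) at_top" and G_lim: "(G \<longlongrightarrow> 0) at_top"
  shows "m * Tf = m * T 0 - k * T1 0 - a / b * (m * Y 0 - G 0)"
proof -
  let ?H = "\<lambda>x. m * T x - k * T1 x - a / b * (m * Y x - G x)"
  have "continuous_on {0..} T" "continuous_on {0..} T1" "continuous_on {0..} Y"
    using T1 T2 Y1 by (auto intro!: DERIV_continuous_on)
  then have "continuous_on {0..} ?H" using G_cont by (intro continuous_intros)
  moreover have "(?H has_real_derivative 0) (at x within {0..})" if "0 < x" for x
  proof -
    have "(G has_real_derivative G1 x) (at x within {0..})"
      using G1 that by (simp add: has_field_derivative_at_within)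
    then have "(?H has_real_derivative
        (m * T1 x - k * T2 x) - a / b * (m * Y1 x - G1 x)) (at x within {0..})"
      using that \<open>b \<noteq> 0\<close>
      by (auto intro!: derivative_eq_intros T1[rule_format] T2[rule_format] Y1[rule_format])
    with energy species \<open>b \<noteq> 0\<close> that show ?thesis by simp
  qed
  moreover have "(?H \<longlongrightarrow> m * Tf - k * 0 - a / b * (m * 0 - 0)) at_top"
    using T_lim T1_lim Y_lim G_lim by (intro tendsto_intros)
  ultimately have "?H 0 = m * Tf - k * 0 - a / b * (m * 0 - 0)"
    by (rule deriv_zero_imp_eq_limit_at_top)
  then show ?thesis by simp
qed

theorem proposition3:
  fixes c rho_s c_s lambda_s c_p lambda_g M nu Q_mol Q_p T0 Tf Ts :: real
    and T TL1 TL2 TR1 TR2 :: "real \<Rightarrow> real"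
    and rho rho1 u u1 Y Y1 Y2 Dg G1 :: "real \<Rightarrow> real"
    and W :: "real \<Rightarrow> real \<Rightarrow> real"
  assumes c_neg: "c < 0"
    and rho_s_pos: "rho_s > 0" and c_s_pos: "c_s > 0" and lambda_s_pos: "lambda_s > 0"
    and c_p_pos: "c_p > 0" and lambda_g_pos: "lambda_g > 0" and M_pos: "M > 0"
    and nu_neg: "nu < 0" and Q_mol_pos: "Q_mol > 0" and T0_pos: "T0 > 0"
    and equal_heats: "c_s = c_p"
    \<comment> \<open>T positive; C^2 on (-inf,0] and on [0,inf) with one-sided derivatives at 0\<close>
    and T_pos: "\<forall>x. T x > 0"
    and TL1_der: "\<forall>x\<le>0. (T has_real_derivative TL1 x) (at x within {..0})"
    and TL2_der: "\<forall>x\<le>0. (TL1 has_real_derivative TL2 x) (at x within {..0})"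
    and TL2_cont: "continuous_on {..0} TL2"
    and TR1_der: "\<forall>x\<ge>0. (T has_real_derivative TR1 x) (at x within {0..})"
    and TR2_der: "\<forall>x\<ge>0. (TR1 has_real_derivative TR2 x) (at x within {0..})"
    and TR2_cont: "continuous_on {0..} TR2"
    \<comment> \<open>gas-phase unknowns on [0,inf) (values at 0 are the 0+ traces)\<close>
    and rho_pos: "\<forall>x\<ge>0. rho x > 0"
    and rho1_der: "\<forall>x\<ge>0. (rho has_real_derivative rho1 x) (at x within {0..})"
    and rho1_cont: "continuous_on {0..} rho1"
    and u1_der: "\<forall>x\<ge>0. (u has_real_derivative u1 x) (at x within {0..})"
    and u1_cont: "continuous_on {0..} u1"
    and Y1_der: "\<forall>x\<ge>0. (Y has_real_derivative Y1 x) (at x within {0..})"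
    and Y2_der: "\<forall>x\<ge>0. (Y1 has_real_derivative Y2 x) (at x within {0..})"
    and Y2_cont: "continuous_on {0..} Y2"
    and Dg_pos: "\<forall>x\<ge>0. Dg x > 0"
    and Dg_cont: "continuous_on {0..} Dg"
    and omega_nonneg: "\<forall>x>0. W (T x) (Y x) \<ge> 0"
    and omega_cont: "continuous_on {0<..} (\<lambda>x. W (T x) (Y x))"
    \<comment> \<open>the diffusive species flux rho Dg Y' is differentiable on x>0 with derivative G1\<close>
    and G1_der: "\<forall>x>0. ((\<lambda>y. rho y * Dg y * Y1 y) has_real_derivative G1 x) (at x)"
    \<comment> \<open>equations\<close>
    and solid_eq: "\<forall>x<0. - c * TL1 x - (lambda_s / (rho_s * c_s)) * TL2 x = 0"
    and mass_eq: "\<forall>x>0. - c * rho1 x + (rho1 x * u x + rho x * u1 x) = 0"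
    and species_eq: "\<forall>x>0. rho x * (u x - c) * Y1 x - G1 x = nu * M * W (T x) (Y x)"
    and energy_eq: "\<forall>x>0. rho x * (u x - c) * TR1 x - (lambda_g / c_p) * TR2 x
                        = W (T x) (Y x) * Q_mol / c_p"
    \<comment> \<open>boundary and interface conditions\<close>
    and T_minf: "(T \<longlongrightarrow> T0) at_bot"
    and TL1_minf: "(TL1 \<longlongrightarrow> 0) at_bot"
    and T_interface: "T 0 = Ts"
    and heat_interface: "lambda_s * TL1 0 = (- rho_s * c) * Q_p + lambda_g * TR1 0"
    and mass_interface: "rho 0 * (u 0 - c) = - rho_s * c"
    and species_interface: "(- rho_s * c) * 1 = (- rho_s * c) * Y 0 - rho 0 * Dg 0 * Y1 0"
    and T_pinf: "(T \<longlongrightarrow> Tf) at_top"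
    and TR1_pinf: "(TR1 \<longlongrightarrow> 0) at_top"
    and Y_pinf: "(Y \<longlongrightarrow> 0) at_top"
    and flux_pinf: "((\<lambda>x. rho x * Dg x * Y1 x) \<longlongrightarrow> 0) at_top"
  shows "Tf = T0 + ((- Q_mol / (nu * M)) + Q_p) / c_p"
proof -
  define m where "m = - rho_s * c"
  have "m > 0" using c_neg rho_s_pos by (simp add: m_def mult_pos_neg)
  have flux: "rho x * (u x - c) = m" if "0 \<le> x" for x
    using mass_flux_constant[OF rho1_der u1_der mass_eq that] mass_interface by (simp add: m_def)
  have solid: "lambda_s * TL1 0 = m * c_p * (Ts - T0)"
  proof -
    have "lambda_s / (rho_s * c_s) * TL1 0 = - c * (Ts - T0)"
      using solid_heat_flux_at_interface[OF TL1_der TL2_der solid_eq T_minf TL1_minf] T_interface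
      by simp
    then show ?thesis using rho_s_pos c_s_pos equal_heats by (simp add: m_def field_simps)
  qed
  have gas: "m * Tf = m * Ts - lambda_g / c_p * TR1 0 - Q_mol / c_p / (nu * M) * m"
  proof -
    have "continuous_on {0..} rho" "continuous_on {0..} Y1"
      using rho1_der Y2_der by (auto intro!: DERIV_continuous_on)
    then have "continuous_on {0..} (\<lambda>x. rho x * Dg x * Y1 x)"
      using Dg_cont by (intro continuous_intros)
    moreover have "\<forall>x>0. m * TR1 x - lambda_g / c_p * TR2 x = Q_mol / c_p * W (T x) (Y x)"
      using energy_eq flux by auto
    moreover have "\<forall>x>0. m * Y1 x - G1 x = nu * M * W (T x) (Y x)"
      using species_eq flux by auto
    moreover have "nu * M \<noteq> 0" using nu_neg M_pos by simp
    ultimately have "m * Tf = m * T 0 - lambda_g / c_p * TR1 0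
        - Q_mol / c_p / (nu * M) * (m * Y 0 - rho 0 * Dg 0 * Y1 0)"
      by (rule gas_energy_species_balance[OF TR1_der TR2_der Y1_der _ G1_der _ _ _
            T_pinf TR1_pinf Y_pinf flux_pinf])
    moreover have "m * Y 0 - rho 0 * Dg 0 * Y1 0 = m"
      using species_interface unfolding m_def by linarith
    ultimately show ?thesis using T_interface by simp
  qed
  have "lambda_g * TR1 0 = m * c_p * (Ts - T0) - m * Q_p"
    using heat_interface solid by (simp add: m_def)
  then have "lambda_g / c_p * TR1 0 = m * (Ts - T0) - m * Q_p / c_p"
    using c_p_pos by (simp add: field_simps)
  with gas have "m * Tf = m * Ts - (m * (Ts - T0) - m * Q_p / c_p) - Q_mol / c_p / (nu * M) * m"
    by simp
  also have "\<dots> = m * (T0 + (- Q_mol / (nu * M) + Q_p) / c_p)"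
    by (simp add: algebra_simps add_divide_distrib diff_divide_distrib)
  finally show ?thesis using \<open>m > 0\<close> by simp
qed

end
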